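(* Let $f(z)=z+\sum_{n\ge 2}a_nz^n\in\mathcal{BT}_{\mathfrak{B}}$ and let $\gamma_1,\gamma_2,\gamma_3$ be its logarithmic coefficients. Then $$|H_{2,1}(F_f/2)|=|\gamma_1\gamma_3-\gamma_2^2|\le\frac{1}{144}.$$ The inequality is sharp, with equality for $f_2(z)=\int_0^z\sqrt{1+\tanh(t^2)}\,dt$.
   Context: $\mathbb{D}=\{z\in\mathbb{C}:|z|<1\}$. $\mathcal{S}$ is the class of univalent analytic functions $f$ on $\mathbb{D}$ normalized by $f(0)=0$, $f'(0)=1$, i.e. $f(z)=z+\sum_{n\ge2}a_nz^n$. For analytic $g,h$ on $\mathbb{D}$, $g\prec h$ means there is an analytic $\omega:\mathbb{D}\to\mathbb{D}$ with $\omega(0)=0$ and $g=h\circ\omega$. Let $\mathfrak{B}(z)=\sqrt{1+\tanh z}$ (principal branch, $\mathfrak{B}(0)=1$). The class $\mathcal{BT}_{\mathfrak{B}}$ is $\{f\in\mathcal{S}: f'(z)\prec \mathfrak{B}(z)\}$. The logarithmic coefficients are defined by $F_f(z):=\log\frac{f(z)}{z}=2\sum_{n\ge1}\gamma_nz^n$; explicitly $\gamma_1=\tfrac12 a_2$, $\gamma_2=\tfrac12(a_3-\tfrac12a_2^2)$, $\gamma_3=\tfrac12(a_4-a_2a_3+\tfrac13a_2^3)$. The Hankel determinant $H_{2,1}(F_f/2):=\gamma_1\gamma_3-\gamma_2^2=\frac{1}{48}(a_2^4-12a_3^2+12a_2a_4)$. *)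

theory Defs
  imports "HOL-Complex_Analysis.Complex_Analysis"
begin

definition BB :: "complex \<Rightarrow> complex" where
  "BB z = csqrt (1 + tanh z)"

definition subordinate :: "(complex \<Rightarrow> complex) \<Rightarrow> (complex \<Rightarrow> complex) \<Rightarrow> bool" where
  "subordinate g h \<longleftrightarrow>
     (\<exists>\<omega>. \<omega> holomorphic_on ball 0 1 \<and> \<omega> ` ball 0 1 \<subseteq> ball 0 1 \<and> \<omega> 0 = 0 \<and>
          (\<forall>z\<in>ball 0 1. g z = h (\<omega> z)))"

definition class_S :: "(complex \<Rightarrow> complex) \<Rightarrow> bool" where
  "class_S f \<longleftrightarrow> f holomorphic_on ball 0 1 \<and> inj_on f (ball 0 1) \<and> f 0 = 0 \<and> deriv f 0 = 1"

definition class_BT :: "(complex \<Rightarrow> complex) \<Rightarrow> bool" where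
  "class_BT f \<longleftrightarrow> class_S f \<and> subordinate (deriv f) BB"

definition tcoeff :: "(complex \<Rightarrow> complex) \<Rightarrow> nat \<Rightarrow> complex" where
  "tcoeff f n = (deriv ^^ n) f 0 / fact n"

text \<open>Logarithmic coefficients gamma_1, gamma_2, gamma_3 in terms of a_2, a_3, a_4.\<close>
definition gamma1 :: "(complex \<Rightarrow> complex) \<Rightarrow> complex" where
  "gamma1 f = tcoeff f 2 / 2"

definition gamma2 :: "(complex \<Rightarrow> complex) \<Rightarrow> complex" where
  "gamma2 f = (tcoeff f 3 - tcoeff f 2 ^ 2 / 2) / 2"

definition gamma3 :: "(complex \<Rightarrow> complex) \<Rightarrow> complex" where
  "gamma3 f = (tcoeff f 4 - tcoeff f 2 * tcoeff f 3 + tcoeff f 2 ^ 3 / 3) / 2"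

definition H21 :: "(complex \<Rightarrow> complex) \<Rightarrow> complex" where
  "H21 f = gamma1 f * gamma3 f - gamma2 f ^ 2"

end

theory Submission
  imports Defs
begin

text \<open>
  Write \<open>f' = B \<circ> \<omega>\<close> with a Schwarz function \<open>\<omega>(z) = c\<^sub>1 z + c\<^sub>2 z\<^sup>2 + c\<^sub>3 z\<^sup>3 + \<dots>\<close>.
  Comparing coefficients with \<open>B(z) = 1 + z/2 - z\<^sup>2/8 - 5 z\<^sup>3/48 + \<dots>\<close> expresses
  \<open>a\<^sub>2, a\<^sub>3, a\<^sub>4\<close>, and hence \<open>\<gamma>\<^sub>1\<gamma>\<^sub>3 - \<gamma>\<^sub>2\<^sup>2\<close>, as a polynomial in \<open>c\<^sub>1, c\<^sub>2, c\<^sub>3\<close>.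
  One step of the Schur algorithm together with the Schwarz lemma gives \<open>|c\<^sub>1| \<le> 1\<close>,
  \<open>|c\<^sub>2| \<le> 1 - |c\<^sub>1|\<^sup>2\<close> and Carlson's inequality
  \<open>|c\<^sub>3 (1 - |c\<^sub>1|\<^sup>2) + cnj c\<^sub>1 c\<^sub>2\<^sup>2| \<le> (1 - |c\<^sub>1|\<^sup>2)\<^sup>2 - |c\<^sub>2|\<^sup>2\<close>; after eliminating \<open>c\<^sub>3\<close>
  through the left-hand side of Carlson's inequality, the triangle inequality reduces the bound
  to an elementary polynomial inequality in \<open>|c\<^sub>1|\<close> and \<open>|c\<^sub>2| / (1 - |c\<^sub>1|\<^sup>2)\<close> on the unit square.
  Equality holds for \<open>\<omega>(z) = z\<^sup>2\<close>; the corresponding function is univalent because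
  \<open>Re f' = Re B(z\<^sup>2) > 0\<close> on the convex disc (Noshiro-Warschawski).
\<close>

lemma fps_expansion_unique_eventually:
  fixes f g :: "complex \<Rightarrow> complex"
  assumes "f has_fps_expansion F" "g has_fps_expansion G" "eventually (\<lambda>z. f z = g z) (nhds 0)"
  shows "F = G"
  using assms has_fps_expansion_cong fps_expansion_unique_complex by metis

lemma eventually_nhds_0_of_ball:
  "(\<And>z. z \<in> ball 0 1 \<Longrightarrow> P z) \<Longrightarrow> eventually P (nhds (0::complex))"
  using eventually_nhds_ball[of 1 0] by (auto elim: eventually_mono)

lemma has_fps_expansion_ball:
  "f holomorphic_on ball 0 1 \<Longrightarrow> f has_fps_expansion fps_expansion f 0"
  by (rule has_fps_expansion_fps_expansion) auto

lemma tcoeff_eq_fps_nth: "tcoeff f n = fps_expansion f 0 $ n"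
  by (simp add: tcoeff_def fps_expansion_def)

lemma fps_expansion_nth_1: "fps_expansion f 0 $ 1 = deriv f 0"
  by (simp add: fps_expansion_def)

lemma fps_compose_nth_1_2_3:
  fixes B W :: "complex fps"
  assumes "W $ 0 = 0"
  shows "(B oo W) $ 1 = B $ 1 * W $ 1"
    and "(B oo W) $ 2 = B $ 1 * W $ 2 + B $ 2 * (W $ 1) ^ 2"
    and "(B oo W) $ 3 = B $ 1 * W $ 3 + 2 * B $ 2 * W $ 1 * W $ 2 + B $ 3 * (W $ 1) ^ 3"
  using assms by (simp_all add: fps_compose_nth fps_mult_nth eval_nat_numeral algebra_simps)

subsection \<open>The power series of \<open>BB\<close>\<close>

definition BB_series :: "complex fps" where
  "BB_series = fps_expansion BB 0"

lemma BB_has_fps_expansion: "BB has_fps_expansion BB_series"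
proof -
  have "BB analytic_on {0}"
    unfolding BB_def[abs_def] by (rule analytic_intros)+ (auto simp: nonpos_Reals_def)
  then show ?thesis
    unfolding BB_series_def by (rule analytic_at_imp_has_fps_expansion_0)
qed

lemma one_plus_tanh_mult:
  fixes z :: "'a :: {banach, real_normed_field}"
  assumes "cosh z \<noteq> 0" shows "(1 + tanh z) * (exp z + exp (- z)) = 2 * exp z"
proof -
  have "exp z + exp (- z) = 2 * cosh z"
    by (simp add: cosh_def scaleR_conv_of_real)
  moreover have "(1 + tanh z) * cosh z = exp z"
    using assms by (simp add: tanh_def field_simps cosh_plus_sinh)
  ultimately show ?thesis
    by (metis mult.left_commute)
qed

lemma BB_series_squared: "BB_series ^ 2 * (fps_exp 1 + fps_exp (-1)) = 2 * fps_exp 1"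
proof (rule fps_expansion_unique_eventually)
  show "(\<lambda>z. BB z ^ 2 * (exp z + exp (- z))) has_fps_expansion
          BB_series ^ 2 * (fps_exp 1 + fps_exp (-1))"
    by (intro fps_expansion_intros BB_has_fps_expansion)
  show "(\<lambda>z. 2 * exp z) has_fps_expansion 2 * fps_exp (1::complex)"
    by (intro fps_expansion_intros)
  have "open {z::complex. cosh z \<noteq> 0}"
    by (intro open_Collect_neq continuous_intros)
  from eventually_nhds_in_open[OF this, of 0]
  have "eventually (\<lambda>z. cosh z \<noteq> (0::complex)) (nhds 0)"
    by simp
  then show "eventually (\<lambda>z. BB z ^ 2 * (exp z + exp (- z)) = 2 * exp z) (nhds 0)"
    by (rule eventually_mono) (simp add: BB_def one_plus_tanh_mult)
qed

lemma BB_series_coeffs: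
  "BB_series $ 0 = 1" "BB_series $ 1 = 1/2" "BB_series $ 2 = -1/8" "BB_series $ 3 = -5/48"
proof -
  have c: "(BB_series ^ 2 * (fps_exp 1 + fps_exp (-1))) $ n = (2 * fps_exp (1::complex)) $ n" for n
    using BB_series_squared by simp
  show b0: "BB_series $ 0 = 1"
    using fps_nth_fps_expansion[OF BB_has_fps_expansion, of 0] by (simp add: BB_def)
  note nth_simps = fps_mult_nth power2_eq_square eval_nat_numeral fps_numeral_nth field_simps
  have b1: "BB_series $ Suc 0 = 1/2"
    using c[of 1] b0 by (simp add: nth_simps; algebra)
  have b2: "BB_series $ Suc (Suc 0) = -1/8"
    using c[of 2] b0 b1 by (simp add: nth_simps; algebra)
  have b3: "BB_series $ 3 = -5/48"
    using c[of 3] b0 b1 b2 by (simp add: nth_simps; algebra)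
  show "BB_series $ 1 = 1/2" "BB_series $ 2 = -1/8" "BB_series $ 3 = -5/48"
    using b1 b2 b3 by (simp_all add: eval_nat_numeral)
qed

definition H21_schwarz :: "complex \<Rightarrow> complex \<Rightarrow> complex \<Rightarrow> complex" where
  "H21_schwarz c1 c2 c3 = (3/8 * c1 * c3 - 1/48 * c1^2 * c2 - 1/3 * c2^2 - 73/768 * c1^4) / 48"

lemma H21_coeff_identity:
  fixes a2 a3 a4 c1 c2 c3 :: complex
  assumes "2 * a2 = c1 / 2" and "3 * a3 = c2 / 2 - c1 ^ 2 / 8"
    and "4 * a4 = c3 / 2 - c1 * c2 / 4 - 5/48 * c1 ^ 3"
  shows "a2 / 2 * ((a4 - a2 * a3 + a2 ^ 3 / 3) / 2) - ((a3 - a2 ^ 2 / 2) / 2) ^ 2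
           = H21_schwarz c1 c2 c3"
proof -
  have a2: "a2 = c1 / 4" and a3: "a3 = (c2 / 2 - c1 ^ 2 / 8) / 3"
    and a4: "a4 = (c3 / 2 - c1 * c2 / 4 - 5/48 * c1 ^ 3) / 4"
    using assms by (simp_all add: field_simps)
  show ?thesis
    unfolding a2 a3 a4 H21_schwarz_def
    by (simp add: field_simps power2_eq_square power3_eq_cube power4_eq_xxxx; algebra)
qed

lemma H21_deriv_eq_BB_comp:
  assumes hf: "f holomorphic_on ball 0 1" and hw: "w holomorphic_on ball 0 1" "w 0 = 0"
    and eq: "\<And>z. z \<in> ball 0 1 \<Longrightarrow> deriv f z = BB (w z)"
  defines "c \<equiv> fps_nth (fps_expansion w 0)"
  shows "H21 f = H21_schwarz (c 1) (c 2) (c 3)"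
proof -
  define a where "a = fps_nth (fps_expansion f 0)"
  have w0: "fps_expansion w 0 $ 0 = 0"
    using hw(2) by (simp add: fps_expansion_def)
  have D: "fps_deriv (fps_expansion f 0) = BB_series oo fps_expansion w 0"
  proof (rule fps_expansion_unique_eventually)
    show "deriv f has_fps_expansion fps_deriv (fps_expansion f 0)"
      by (intro has_fps_expansion_deriv has_fps_expansion_ball hf)
    show "(BB \<circ> w) has_fps_expansion (BB_series oo fps_expansion w 0)"
      by (intro has_fps_expansion_compose BB_has_fps_expansion has_fps_expansion_ball hw w0)
  qed (intro eventually_nhds_0_of_ball, simp add: eq)
  have a_c: "of_nat (n + 1) * a (n + 1) = (BB_series oo fps_expansion w 0) $ n" for n
    unfolding a_def D[symmetric] by simp
  have a: "2 * a 2 = c 1 / 2" "3 * a 3 = c 2 / 2 - c 1 ^ 2 / 8"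
    "4 * a 4 = c 3 / 2 - c 1 * c 2 / 4 - 5/48 * c 1 ^ 3"
    using a_c[of 1] a_c[of 2] a_c[of 3] fps_compose_nth_1_2_3[OF w0, of BB_series] BB_series_coeffs
    unfolding c_def by (simp_all add: eval_nat_numeral)
  show ?thesis
    unfolding H21_def gamma1_def gamma2_def gamma3_def tcoeff_eq_fps_nth a_def[symmetric]
    by (rule H21_coeff_identity[OF a])
qed

subsection \<open>Coefficients of Schwarz functions\<close>

definition schwarz_function :: "(complex \<Rightarrow> complex) \<Rightarrow> bool" where
  "schwarz_function w \<longleftrightarrow> w holomorphic_on ball 0 1 \<and> w ` ball 0 1 \<subseteq> ball 0 1 \<and> w 0 = 0"

lemma subordinate_iff_schwarz_function:
  "subordinate g h \<longleftrightarrow> (\<exists>w. schwarz_function w \<and> (\<forall>z\<in>ball 0 1. g z = h (w z)))"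
  by (auto simp: subordinate_def schwarz_function_def)

lemma schwarz_functionD:
  assumes "schwarz_function w"
  shows "w holomorphic_on ball 0 1" "w 0 = 0" "\<And>z. norm z < 1 \<Longrightarrow> norm (w z) < 1"
  using assms by (auto simp: schwarz_function_def image_subset_iff)

lemma schwarz_function_coeff1_le:
  assumes "schwarz_function w" shows "norm (fps_expansion w 0 $ 1) \<le> 1"
  unfolding fps_expansion_nth_1 using Schwarz_Lemma(2)[OF schwarz_functionD[OF assms], of 0] by simp

lemma schwarz_function_rotation:
  assumes w: "schwarz_function w" and "norm (fps_expansion w 0 $ 1) = 1" and "n \<noteq> 1"
  shows "fps_expansion w 0 $ n = 0"
proof -
  obtain a where a: "\<And>z. norm z < 1 \<Longrightarrow> w z = a * z"
    using Schwarz_Lemma(3)[OF schwarz_functionD[OF w], of 0] assms(2)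
    unfolding fps_expansion_nth_1 by auto
  have "(\<lambda>z. a * z) has_fps_expansion fps_const a * fps_X"
    by (intro fps_expansion_intros)
  then have "fps_expansion w 0 = fps_const a * fps_X"
    by (intro fps_expansion_unique_eventually[OF has_fps_expansion_ball] eventually_nhds_0_of_ball)
       (use w in \<open>auto simp: a schwarz_function_def\<close>)
  then show ?thesis
    using \<open>n \<noteq> 1\<close> by simp
qed

lemma schwarz_function_quotient:
  assumes w: "schwarz_function w" and d: "norm (deriv w 0) < 1"
  obtains g where "g holomorphic_on ball 0 1" "\<And>z. norm z < 1 \<Longrightarrow> norm (g z) < 1"
    "g 0 = deriv w 0" "\<And>z. w z = z * g z"
proof -
  note hw = schwarz_functionD[OF w]
  define g where "g z = (if z = 0 then deriv w 0 else (w z - w 0) / (z - 0))" for z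
  have "g holomorphic_on ball 0 1"
    unfolding g_def[abs_def] by (rule pole_lemma[OF hw(1)]) auto
  moreover have "norm (g z) < 1" if z: "norm z < 1" for z
  proof (cases "z = 0")
    case True
    then show ?thesis using d by (simp add: g_def)
  next
    case False
    have "norm (w z) \<noteq> norm z"
    proof
      assume "norm (w z) = norm z"
      then obtain a where a: "\<And>z. norm z < 1 \<Longrightarrow> w z = a * z" "norm a = 1"
        using Schwarz_Lemma(3)[OF hw z] z False by blast
      have "deriv w 0 = deriv (\<lambda>z. a * z) 0"
        by (intro deriv_cong_ev eventually_nhds_0_of_ball) (auto simp: a)
      then show False using a(2) d by simp
    qed
    with Schwarz_Lemma(1)[OF hw z] have "norm (w z) < norm z" by simp
    then show ?thesis using False hw(2) by (simp add: g_def norm_divide divide_less_eq)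
  qed
  moreover have "w z = z * g z" for z
    using hw(2) by (simp add: g_def)
  moreover have "g 0 = deriv w 0"
    by (simp add: g_def)
  ultimately show ?thesis
    using that by blast
qed

lemma schwarz_function_Moebius_comp:
  assumes g: "g holomorphic_on ball 0 1" and gb: "\<And>z. norm z < 1 \<Longrightarrow> norm (g z) < 1"
  shows "schwarz_function (\<lambda>z. Moebius_function 0 (g 0) (g z))"
proof -
  have g0: "norm (g 0) < 1"
    using gb[of 0] by simp
  have "(\<lambda>z. Moebius_function 0 (g 0) (g z)) holomorphic_on ball 0 1"
    by (rule holomorphic_on_compose_gen[OF g Moebius_function_holomorphic[OF g0], unfolded o_def])
       (use gb in auto)
  moreover have "(\<lambda>z. Moebius_function 0 (g 0) (g z)) ` ball 0 1 \<subseteq> ball 0 1"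
    using gb g0 by (auto intro!: Moebius_function_norm_lt_1)
  ultimately show ?thesis
    by (simp add: schwarz_function_def Moebius_function_eq_zero)
qed

lemma fps_nth_Moebius_relation:
  fixes G H :: "complex fps"
  assumes HG: "H * (1 - fps_const (cnj (G $ 0)) * G) = G - fps_const (G $ 0)" and H0: "H $ 0 = 0"
  shows "H $ 1 * (1 - cnj (G $ 0) * G $ 0) = G $ 1"
    and "H $ 2 * (1 - cnj (G $ 0) * G $ 0) = G $ 2 + cnj (G $ 0) * G $ 1 * H $ 1"
proof -
  have "(H * (1 - fps_const (cnj (G $ 0)) * G)) $ 1 = (G - fps_const (G $ 0)) $ 1"
    and "(H * (1 - fps_const (cnj (G $ 0)) * G)) $ 2 = (G - fps_const (G $ 0)) $ 2"
    using HG by simp_all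
  then show "H $ 1 * (1 - cnj (G $ 0) * G $ 0) = G $ 1"
    and "H $ 2 * (1 - cnj (G $ 0) * G $ 0) = G $ 2 + cnj (G $ 0) * G $ 1 * H $ 1"
    using H0 by (simp_all add: fps_mult_nth eval_nat_numeral algebra_simps)
qed

text \<open>One step of the Schur algorithm: \<open>h\<close> is the Moebius transform of \<open>w(z)/z\<close> that vanishes at 0.\<close>
lemma schwarz_function_schur_step:
  assumes w: "schwarz_function w" and c1: "norm (fps_expansion w 0 $ 1) < 1"
  defines "c \<equiv> fps_nth (fps_expansion w 0)"
  obtains h where "schwarz_function h"
    "fps_expansion h 0 $ 1 * (1 - cnj (c 1) * c 1) = c 2"
    "fps_expansion h 0 $ 2 * (1 - cnj (c 1) * c 1) = c 3 + cnj (c 1) * c 2 * fps_expansion h 0 $ 1"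
proof -
  obtain g where g: "g holomorphic_on ball 0 1" and gb: "\<And>z. norm z < 1 \<Longrightarrow> norm (g z) < 1"
    and g0: "g 0 = c 1" and wg: "\<And>z. w z = z * g z"
    using schwarz_function_quotient[OF w] c1 unfolding c_def fps_expansion_nth_1 by metis
  define h where "h z = Moebius_function 0 (c 1) (g z)" for z
  have h: "schwarz_function h"
    unfolding h_def g0[symmetric] using g gb by (rule schwarz_function_Moebius_comp)
  define G H where "G = fps_expansion g 0" and "H = fps_expansion h 0"
  have eG: "g has_fps_expansion G" and eH: "h has_fps_expansion H"
    unfolding G_def H_def using has_fps_expansion_ball g schwarz_functionD(1)[OF h] by auto
  have "fps_expansion w 0 = fps_X * G"
  proof (rule fps_expansion_unique_eventually)
    show "w has_fps_expansion fps_expansion w 0"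
      using schwarz_functionD(1)[OF w] by (rule has_fps_expansion_ball)
    show "(\<lambda>z. z * g z) has_fps_expansion fps_X * G"
      by (intro fps_expansion_intros eG)
    show "eventually (\<lambda>z. w z = z * g z) (nhds 0)"
      by (rule always_eventually) (use wg in blast)
  qed
  then have c_G: "c (Suc n) = G $ n" for n
    by (simp add: c_def)
  have HG: "H * (1 - fps_const (cnj (c 1)) * G) = G - fps_const (c 1)"
  proof (rule fps_expansion_unique_eventually)
    show "(\<lambda>z. h z * (1 - cnj (c 1) * g z)) has_fps_expansion H * (1 - fps_const (cnj (c 1)) * G)"
      and "(\<lambda>z. g z - c 1) has_fps_expansion G - fps_const (c 1)"
      by (intro fps_expansion_intros eG eH)+
    have "h z * (1 - cnj (c 1) * g z) = g z - c 1" if "norm z < 1" for z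
    proof -
      have "norm (cnj (c 1) * g z) < 1 * 1"
        using gb[OF that] gb[of 0] g0 by (intro norm_mult_less) auto
      then show ?thesis
        by (auto simp: h_def Moebius_function_simple)
    qed
    then show "eventually (\<lambda>z. h z * (1 - cnj (c 1) * g z) = g z - c 1) (nhds 0)"
      by (intro eventually_nhds_0_of_ball) simp
  qed
  have "G $ 0 = c 1" and "H $ 0 = 0"
    using has_fps_expansion_imp_0_eq_fps_nth_0[OF eG] has_fps_expansion_imp_0_eq_fps_nth_0[OF eH]
      g0 schwarz_functionD(2)[OF h] by simp_all
  with fps_nth_Moebius_relation[of H G] HG c_G[of 1] c_G[of 2] show ?thesis
    using that h unfolding H_def by (simp add: numeral_2_eq_2 numeral_3_eq_3)
qed

lemma cnj_mult_self: "cnj c * c = of_real (norm c ^ 2)"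
  using complex_norm_square[of c] by (simp add: mult.commute)

lemma schwarz_function_coeff2_le:
  assumes w: "schwarz_function w"
  defines "c \<equiv> fps_nth (fps_expansion w 0)"
  shows "norm (c 2) \<le> 1 - norm (c 1) ^ 2"
proof (cases "norm (c 1) = 1")
  case True
  then show ?thesis
    using schwarz_function_rotation[OF w, of 2] by (simp add: c_def)
next
  case False
  with schwarz_function_coeff1_le[OF w] have "norm (c 1) < 1"
    by (simp add: c_def)
  then obtain h where h: "schwarz_function h" "fps_expansion h 0 $ 1 * (1 - cnj (c 1) * c 1) = c 2"
    using schwarz_function_schur_step[OF w] unfolding c_def by metis
  define s where "s = 1 - norm (c 1) ^ 2"
  have s0: "s \<ge> 0"
    using \<open>norm (c 1) < 1\<close> by (simp add: s_def abs_square_le_1)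
  have "c 2 = fps_expansion h 0 $ 1 * of_real s"
    using h(2) by (simp add: cnj_mult_self s_def)
  then have "norm (c 2) = norm (fps_expansion h 0 $ 1) * s"
    using s0 by (simp add: norm_mult)
  also have "\<dots> \<le> 1 * s"
    using schwarz_function_coeff1_le[OF h(1)] s0 by (intro mult_right_mono)
  finally show ?thesis
    by (simp add: s_def)
qed

lemma schwarz_function_coeff3_le:
  assumes w: "schwarz_function w"
  defines "c \<equiv> fps_nth (fps_expansion w 0)"
  shows "norm (c 3 * (1 - norm (c 1) ^ 2) + cnj (c 1) * c 2 ^ 2) \<le> (1 - norm (c 1) ^ 2) ^ 2 - norm (c 2) ^ 2"
proof (cases "norm (c 1) = 1")
  case True
  then show ?thesis
    using schwarz_function_rotation[OF w, of 2] schwarz_function_rotation[OF w, of 3]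
    by (simp add: c_def)
next
  case False
  with schwarz_function_coeff1_le[OF w] have "norm (c 1) < 1"
    by (simp add: c_def)
  then obtain h where h: "schwarz_function h"
      "fps_expansion h 0 $ 1 * (1 - cnj (c 1) * c 1) = c 2"
      "fps_expansion h 0 $ 2 * (1 - cnj (c 1) * c 1) = c 3 + cnj (c 1) * c 2 * fps_expansion h 0 $ 1"
    using schwarz_function_schur_step[OF w] unfolding c_def by metis
  define s where "s = 1 - norm (c 1) ^ 2"
  define d where "d = fps_nth (fps_expansion h 0)"
  have s0: "s \<ge> 0"
    using \<open>norm (c 1) < 1\<close> by (simp add: s_def abs_square_le_1)
  have e1: "c 2 = d 1 * of_real s" and e2: "d 2 * of_real s = c 3 + cnj (c 1) * c 2 * d 1"
    using h(2,3) by (simp_all add: cnj_mult_self s_def d_def)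
  have "c 3 * of_real s + cnj (c 1) * c 2 ^ 2 = d 2 * of_real s * of_real s"
    unfolding e2 by (simp add: e1 power2_eq_square algebra_simps)
  then have "norm (c 3 * of_real s + cnj (c 1) * c 2 ^ 2) = norm (d 2) * s ^ 2"
    using s0 by (simp add: norm_mult power2_eq_square)
  also have "\<dots> \<le> (1 - norm (d 1) ^ 2) * s ^ 2"
    using schwarz_function_coeff2_le[OF h(1)] by (intro mult_right_mono) (auto simp: d_def)
  also have "\<dots> = s ^ 2 - norm (c 2) ^ 2"
    unfolding e1 using s0 by (simp add: norm_mult power2_eq_square algebra_simps)
  finally show ?thesis
    unfolding s_def by simp
qed

subsection \<open>The Hankel bound\<close>

lemma H21_real_bound:
  fixes x y :: real
  assumes x: "0 \<le> x" "x \<le> 1" and y: "0 \<le> y" "y \<le> 1"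
  shows "9/8 * x * (1 - x^2) * (1 - y^2) + (1 - x^2) * y^2 * (1 + x^2/8)
           + x^2 * (1 - x^2) * y / 16 + 73/256 * x^4 \<le> 1"
    (is "?E y \<le> 1")
proof -
  have s: "0 \<le> 1 - x^2"
    using x by (simp add: power_le_one)
  have "x * (1 - x) \<le> 1/4"
    using zero_le_power2[of "x - 1/2"] by (simp add: power2_eq_square algebra_simps)
  then have "x * (1 - x) * (1 + x) \<le> 1/4 * 2"
    using x by (intro mult_mono) auto
  then have "x * (1 - x^2) \<le> 1/2"
    by (simp add: power2_eq_square algebra_simps)
  moreover have "x^4 \<le> 1"
    using x by (simp add: power_le_one)
  ultimately have E0: "?E 0 \<le> 1"
    by simp
  have "x^4 \<le> x^2"
    using x by (simp add: power_decreasing)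
  moreover have "?E 1 = 1 - 13/16 * x^2 + 25/256 * x^4"
    by (simp add: field_simps power2_eq_square power4_eq_xxxx)
  ultimately have E1: "?E 1 \<le> 1"
    using zero_le_power2[of x] by linarith
  text \<open>\<open>?E\<close> is a quadratic in \<open>y\<close> with nonnegative leading coefficient, hence below its chord.\<close>
  have "?E y \<le> ?E y + y * (1 - y) * (1 - x^2) * ((1 - x) * (1 - x/8))"
    using x y s by simp
  also have "\<dots> = (1 - y) * ?E 0 + y * ?E 1"
    by (simp add: field_simps power2_eq_square power4_eq_xxxx)
  also have "\<dots> \<le> (1 - y) * 1 + y * 1"
    using y E0 E1 by (intro add_mono mult_left_mono) auto
  finally show ?thesis
    by simp
qed

text \<open>Trades \<open>c3\<close> for the quantity whose size Carlson's inequality controls.\<close>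
lemma H21_schwarz_Carlson_form:
  fixes c1 c2 c3 :: complex and s q :: real
  assumes s: "s = 1 - norm c1 ^ 2" "s \<noteq> 0" and q: "q = (9/8 * norm c1 ^ 2 + s) / s"
  shows "144 * H21_schwarz c1 c2 c3 =
      9/8 * c1 * (c3 * of_real s + cnj c1 * c2 ^ 2) / of_real s - c2 ^ 2 * of_real q
        - c1 ^ 2 * c2 / 16 - 73/256 * c1 ^ 4"
  using s(2) unfolding H21_schwarz_def q by (simp add: field_simps) (simp flip: complex_norm_square)

lemma H21_schwarz_bound:
  fixes c1 c2 c3 :: complex
  assumes c1: "norm c1 \<le> 1" and c2: "norm c2 \<le> 1 - norm c1 ^ 2"
    and c3: "norm (c3 * (1 - norm c1 ^ 2) + cnj c1 * c2 ^ 2) \<le> (1 - norm c1 ^ 2) ^ 2 - norm c2 ^ 2"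
    and rotation: "norm c1 = 1 \<Longrightarrow> c3 = 0"
  shows "norm (H21_schwarz c1 c2 c3) \<le> 1/144"
proof (cases "norm c1 = 1")
  case True
  then have "c2 = 0" "c3 = 0"
    using c2 rotation by auto
  then show ?thesis
    using True by (simp add: H21_schwarz_def norm_power)
next
  case False
  define x s t where "x = norm c1" and "s = 1 - x ^ 2" and "t = norm c2"
  define u where "u = c3 * of_real s + cnj c1 * c2 ^ 2"
  have x: "0 \<le> x" "x < 1"
    using c1 False by (auto simp: x_def)
  have s: "0 < s"
    using x by (simp add: s_def abs_square_less_1)
  have t: "0 \<le> t" "t \<le> s"
    using c2 by (auto simp: t_def s_def x_def)
  have u: "norm u \<le> s ^ 2 - t ^ 2"
    using c3 by (simp add: u_def s_def t_def x_def)
  define q where "q = (9/8 * x ^ 2 + s) / s"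
  have q: "0 \<le> q"
    using s by (simp add: q_def)
  have identity: "144 * H21_schwarz c1 c2 c3 =
      9/8 * c1 * u / of_real s - c2 ^ 2 * of_real q - c1 ^ 2 * c2 / 16 - 73/256 * c1 ^ 4"
    unfolding u_def using s by (intro H21_schwarz_Carlson_form) (auto simp: s_def q_def x_def)
  have "144 * norm (H21_schwarz c1 c2 c3) = norm (144 * H21_schwarz c1 c2 c3)"
    by (simp add: norm_mult)
  also have "\<dots> \<le> norm (9/8 * c1 * u / of_real s) + norm (c2 ^ 2 * of_real q)
        + norm (c1 ^ 2 * c2 / 16) + norm (73/256 * c1 ^ 4)"
    unfolding identity by (intro order.trans[OF norm_triangle_ineq4] add_mono order_refl)
  also have "\<dots> = 9/8 * x * norm u / s + t ^ 2 * q + x ^ 2 * t / 16 + 73/256 * x ^ 4"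
    using s x q by (simp add: norm_mult norm_divide norm_power x_def t_def)
  also have "\<dots> \<le> 9/8 * x * (s ^ 2 - t ^ 2) / s + t ^ 2 * q + x ^ 2 * t / 16 + 73/256 * x ^ 4"
    using u s x by (intro add_mono order_refl divide_right_mono mult_left_mono) auto
  also have "\<dots> = 9/8 * x * (1 - x ^ 2) * (1 - (t/s) ^ 2) + (1 - x ^ 2) * (t/s) ^ 2 * (1 + x ^ 2/8)
      + x ^ 2 * (1 - x ^ 2) * (t/s) / 16 + 73/256 * x ^ 4"
    using s unfolding s_def[symmetric] q_def
    by (simp add: field_simps power2_eq_square) (simp add: s_def algebra_simps power2_eq_square)
  also have "\<dots> \<le> 1"
    using H21_real_bound[of x "t/s"] x t s by simp
  finally show ?thesis
    by simp
qed

subsection \<open>Univalence of the extremal function\<close>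

text \<open>Noshiro-Warschawski: along the segment from \<open>z\<close> to \<open>w\<close>, \<open>Re (f/(w - z))\<close> is strictly increasing.\<close>
lemma inj_on_if_Re_deriv_pos:
  assumes S: "convex S" "open S" and f: "f holomorphic_on S"
    and pos: "\<And>z. z \<in> S \<Longrightarrow> 0 < Re (deriv f z)"
  shows "inj_on f S"
proof (rule inj_onI, rule ccontr)
  fix z w assume z: "z \<in> S" and w: "w \<in> S" and eq: "f z = f w" and "z \<noteq> w"
  define d where "d = w - z"
  define p where "p t = z + of_real t * d" for t
  have "d \<noteq> 0"
    using \<open>z \<noteq> w\<close> by (simp add: d_def)
  have pS: "p t \<in> S" if "0 \<le> t" "t \<le> 1" for t
  proof -
    have "p t = (1 - t) *\<^sub>R z + t *\<^sub>R w"
      by (simp add: p_def d_def scaleR_conv_of_real algebra_simps)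
    then show ?thesis
      using convexD_alt[OF S(1) z w that] by simp
  qed
  have der: "((\<lambda>t. Re (f (p t) / d)) has_real_derivative Re (deriv f (p t))) (at t)"
    if "0 \<le> t" "t \<le> 1" for t
  proof -
    have "(f has_field_derivative deriv f (p t)) (at (p t))"
      using holomorphic_derivI[OF f S(2) pS[OF that]] .
    moreover have "((\<lambda>s. z + s * d) has_field_derivative d) (at (of_real t))"
      by (auto intro!: derivative_eq_intros)
    ultimately have "((\<lambda>s. f (z + s * d)) has_field_derivative deriv f (p t) * d) (at (of_real t))"
      unfolding p_def by (rule DERIV_chain2)
    from DERIV_cdivide[OF this, where c = d]
    have "((\<lambda>s. f (z + s * d) / d) has_field_derivative deriv f (p t)) (at (of_real t))"
      using \<open>d \<noteq> 0\<close> by simp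
    then have "((\<lambda>t. f (p t) / d) has_vector_derivative deriv f (p t)) (at t)"
      unfolding p_def by (rule has_vector_derivative_real_field)
    then show ?thesis
      by (simp add: has_vector_derivative_complex_iff)
  qed
  have "Re (f (p 0) / d) < Re (f (p 1) / d)"
  proof (rule DERIV_pos_imp_increasing[of 0 1])
    fix t :: real
    assume t: "0 \<le> t" "t \<le> 1"
    show "\<exists>y. ((\<lambda>t. Re (f (p t) / d)) has_real_derivative y) (at t) \<and> 0 < y"
      using der[OF t] pos[OF pS[OF t]] by blast
  qed simp
  moreover have "p 0 = z" "p 1 = w"
    by (simp_all add: p_def d_def)
  ultimately show False
    using eq by simp
qed

lemma exp_notin_nonpos_Reals:
  assumes "\<bar>Im v\<bar> < pi" shows "exp v \<notin> \<real>\<^sub>\<le>\<^sub>0"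
proof
  assume "exp v \<in> \<real>\<^sub>\<le>\<^sub>0"
  then have "sin (Im v) = 0" "cos (Im v) \<le> 0"
    by (simp_all add: complex_nonpos_Reals_iff Re_exp Im_exp mult_le_0_iff)
  moreover have "Im v = 0"
    by (rule sin_eq_0_pi) (use assms \<open>sin (Im v) = 0\<close> in auto)
  ultimately show False
    by simp
qed

lemma one_plus_tanh_notin_nonpos_Reals:
  fixes u :: complex
  assumes "\<bar>Im u\<bar> < pi / 2" shows "1 + tanh u \<notin> \<real>\<^sub>\<le>\<^sub>0"
proof
  assume "1 + tanh u \<in> \<real>\<^sub>\<le>\<^sub>0"
  then obtain r where r: "1 + tanh u = of_real r" "r \<le> 0"
    by (auto simp: nonpos_Reals_def)
  have "cosh u \<noteq> 0"
    using r by (auto simp: tanh_def)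
  from one_plus_tanh_mult[OF this]
  have "of_real r * (exp u + exp (- u)) * exp u = 2 * exp u * exp u"
    by (simp add: r(1))
  moreover have "exp u * exp (- u) = 1" "exp (2 * u) = exp u * exp u"
    by (simp_all add: exp_minus_inverse flip: exp_add)
  ultimately have "of_real r * (exp (2 * u) + 1) = 2 * exp (2 * u)"
    by algebra
  then have "exp (2 * u) * (2 - of_real r) = of_real r"
    by algebra
  moreover have "complex_of_real r \<noteq> 2"
  proof
    assume "complex_of_real r = 2"
    then have "Re (complex_of_real r) = 2"
      by simp
    with r(2) show False
      by simp
  qed
  ultimately have "exp (2 * u) = of_real (r / (2 - r))"
    by (simp add: eq_divide_eq)
  moreover have "r / (2 - r) \<le> 0"
    using r(2) by (simp add: divide_nonpos_pos)
  ultimately have "exp (2 * u) \<in> \<real>\<^sub>\<le>\<^sub>0"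
    by (metis nonpos_Reals_of_real_iff)
  moreover have "\<bar>Im (2 * u)\<bar> < pi"
    using assms by simp
  ultimately show False
    using exp_notin_nonpos_Reals by blast
qed

lemma Re_csqrt_pos:
  assumes "z \<notin> \<real>\<^sub>\<le>\<^sub>0" shows "0 < Re (csqrt z)"
proof (rule ccontr)
  define c where "c = csqrt z"
  assume "\<not> 0 < Re (csqrt z)"
  then have "Re c = 0"
    using Re_csqrt[of z] by (simp add: c_def)
  moreover have "z = c ^ 2"
    by (simp add: c_def)
  ultimately have "Re z = - (Im c ^ 2)" "Im z = 0"
    by (simp_all add: Re_power2 Im_power2)
  then have "z \<in> \<real>\<^sub>\<le>\<^sub>0"
    by (simp add: complex_nonpos_Reals_iff)
  with assms show False ..
qed

lemma Re_BB_pos: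
  assumes "\<bar>Im u\<bar> < pi / 2" shows "0 < Re (BB u)"
  unfolding BB_def by (intro Re_csqrt_pos one_plus_tanh_notin_nonpos_Reals assms)

lemma class_BT_H21_le:
  assumes "class_BT f" shows "norm (H21 f) \<le> 1/144"
proof -
  have hf: "f holomorphic_on ball 0 1"
    using assms by (simp add: class_BT_def class_S_def)
  obtain w where w: "schwarz_function w" and eq: "\<forall>z\<in>ball 0 1. deriv f z = BB (w z)"
    using assms by (auto simp: class_BT_def subordinate_iff_schwarz_function)
  define c where "c = fps_nth (fps_expansion w 0)"
  have "H21 f = H21_schwarz (c 1) (c 2) (c 3)"
    unfolding c_def using schwarz_functionD[OF w] eq by (intro H21_deriv_eq_BB_comp hf) auto
  moreover have "norm (H21_schwarz (c 1) (c 2) (c 3)) \<le> 1/144"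
    using schwarz_function_coeff1_le[OF w] schwarz_function_coeff2_le[OF w]
      schwarz_function_coeff3_le[OF w] schwarz_function_rotation[OF w, of 3]
    unfolding c_def by (intro H21_schwarz_bound) auto
  ultimately show ?thesis
    by simp
qed

lemma class_BT_extremal:
  assumes hf: "f holomorphic_on ball 0 1" and f0: "f 0 = 0"
    and eq: "\<forall>z\<in>ball 0 1. deriv f z = BB (z ^ 2)"
  shows "class_BT f \<and> norm (H21 f) = 1/144"
proof -
  have w: "schwarz_function (\<lambda>z. z ^ 2)"
    by (auto simp: schwarz_function_def norm_power abs_square_less_1 intro!: holomorphic_intros)
  have "inj_on f (ball 0 1)"
  proof (rule inj_on_if_Re_deriv_pos[OF convex_ball open_ball hf])
    fix z :: complex
    assume z: "z \<in> ball 0 1"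
    have "\<bar>Im (z ^ 2)\<bar> \<le> norm (z ^ 2)"
      by (rule abs_Im_le_cmod)
    also have "\<dots> < 1"
      using z by (simp add: norm_power abs_square_less_1)
    also have "1 < pi / 2"
      using pi_gt3 by simp
    finally show "0 < Re (deriv f z)"
      using eq z Re_BB_pos by simp
  qed
  moreover have "subordinate (deriv f) BB"
    using w eq by (auto simp: subordinate_iff_schwarz_function)
  moreover have "deriv f 0 = 1"
    using eq by (simp add: BB_def)
  ultimately have "class_BT f"
    using hf f0 by (simp add: class_BT_def class_S_def)
  moreover have "H21 f = H21_schwarz 0 1 0"
  proof -
    have "fps_expansion (\<lambda>z. z ^ 2) 0 = fps_X ^ 2"
      by (intro fps_expansion_eqI has_fps_expansion_fps_X_power)
    then show ?thesis
      using H21_deriv_eq_BB_comp[OF hf schwarz_functionD(1,2)[OF w]] eq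
      by (simp add: fps_X_power_iff)
  qed
  ultimately show ?thesis
    by (simp add: H21_schwarz_def)
qed

theorem theorem2p1:
  shows "(\<forall>f. class_BT f \<longrightarrow> cmod (H21 f) \<le> 1 / 144) \<and>
         (\<forall>f2. f2 holomorphic_on ball 0 1 \<and> f2 0 = 0 \<and>
               (\<forall>z\<in>ball 0 1. deriv f2 z = BB (z ^ 2))
            \<longrightarrow> class_BT f2 \<and> cmod (H21 f2) = 1 / 144)"
  using class_BT_H21_le class_BT_extremal by auto

end
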